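(* For every CFTR program $\mathtt{p}$ there is a polynomial $\pi$ such that for every input $x\in\{0,1\}^*$ on which $\mathtt{p}$ terminates, $\mathit{time}_{\mathtt{p}}(x) \le \pi(|x|)$.
   Context: CF ("cons-free") is a first-order, call-by-value functional language over booleans and bit lists $\{0,1\}^*$. A program is a finite sequence of mutually recursive function definitions $\mathtt{f\ x1 \dots xm = e}$ ($m\ge0$), the first being a one-argument entry function. Expressions are $\mathtt{True}$, $\mathtt{False}$, $\mathtt{[]}$, variables, base calls $\mathtt{not\ e}$, $\mathtt{null\ e}$, $\mathtt{head\ e}$, $\mathtt{tail\ e}$, conditionals $\mathtt{if\ e_0\ then\ e_1\ else\ e_2}$, and calls $\mathtt{f\ e_1\dots e_m}$ of defined functions; there are no list constructors. Semantics is standard big-step call-by-value evaluation given by inference rules deriving $\mathtt{p},\rho\vdash\mathtt{e}\to v$; the derivation tree for the run on input $x$ is the computation tree $\mathcal{T}^{\mathtt{p},x}$, and the native running time $\mathit{time}_{\mathtt{p}}(x)$ is the number of nodes of $\mathcal{T}^{\mathtt{p},x}$. Tail form is defined via $\alpha:\mathrm{Exp}\to\{X,T,N\}$ with order $X<T<N$: $\alpha(\text{constant or variable})=X$; $\alpha(\mathtt{base\ e})=X$ if $\alpha(\mathtt{e})=X$, else $N$; $\alpha(\mathtt{f\ e_1\dots e_m})=T$ if all $\alpha(\mathtt{e_i})=X$, else $N$; $\alpha(\mathtt{if\ e_0\ then\ e_1\ else\ e_2})=\max(\alpha(\mathtt{e_1}),\alpha(\mathtt{e_2}))$ if $\alpha(\mathtt{e_0})=X$,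 else $N$. A CFTR program is a CF program in which every function definition $\mathtt{f\ x1\dots xm=e}$ has $\alpha(\mathtt{e})\in\{X,T\}$. *)

theory Defs
  imports "HOL-Computational_Algebra.Polynomial"
begin

text \<open>Values: booleans and bit lists (bit 1 is represented by True, 0 by False).\<close>
datatype val = VBool bool | VList "bool list"

text \<open>Variables are referred to by their position in the parameter list of the
  enclosing definition; defined functions by their position in the program.\<close>
datatype exp =
    ETrue | EFalse | ENil
  | EVar nat
  | ENot exp | ENull exp | EHead exp | ETail exp
  | EIf exp exp exp
  | ECall nat "exp list"

text \<open>A program is a list of definitions; each definition is (arity m, body e).
  The first definition is the entry function.\<close>
type_synonym prog = "(nat \<times> exp) list"

fun wf_exp :: "prog \<Rightarrow> nat \<Rightarrow> exp \<Rightarrow> bool" where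
  "wf_exp p m ETrue = True"
| "wf_exp p m EFalse = True"
| "wf_exp p m ENil = True"
| "wf_exp p m (EVar i) = (i < m)"
| "wf_exp p m (ENot e) = wf_exp p m e"
| "wf_exp p m (ENull e) = wf_exp p m e"
| "wf_exp p m (EHead e) = wf_exp p m e"
| "wf_exp p m (ETail e) = wf_exp p m e"
| "wf_exp p m (EIf e0 e1 e2) = (wf_exp p m e0 \<and> wf_exp p m e1 \<and> wf_exp p m e2)"
| "wf_exp p m (ECall f es) =
     (f < length p \<and> length es = fst (p ! f) \<and> (\<forall>e\<in>set es. wf_exp p m e))"

definition wf_prog :: "prog \<Rightarrow> bool" where
  "wf_prog p \<longleftrightarrow> p \<noteq> [] \<and> fst (p ! 0) = 1 \<and>
     (\<forall>d\<in>set p. wf_exp p (fst d) (snd d))"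

text \<open>eval p rho e v t: the judgment p,\<rho> |- e -> v is derivable, and its
  (unique) derivation tree has exactly t nodes.  evals handles the argument
  list of a call (t = total number of nodes of the argument subtrees).\<close>
inductive eval :: "prog \<Rightarrow> val list \<Rightarrow> exp \<Rightarrow> val \<Rightarrow> nat \<Rightarrow> bool"
  and evals :: "prog \<Rightarrow> val list \<Rightarrow> exp list \<Rightarrow> val list \<Rightarrow> nat \<Rightarrow> bool"
  for p :: prog where
  ev_true: "eval p \<rho> ETrue (VBool True) 1"
| ev_false: "eval p \<rho> EFalse (VBool False) 1"
| ev_nil: "eval p \<rho> ENil (VList []) 1"
| ev_var: "i < length \<rho> \<Longrightarrow> eval p \<rho> (EVar i) (\<rho> ! i) 1"
| ev_not: "eval p \<rho> e (VBool b) t \<Longrightarrow> eval p \<rho> (ENot e) (VBool (\<not> b)) (t + 1)"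
| ev_null: "eval p \<rho> e (VList xs) t \<Longrightarrow> eval p \<rho> (ENull e) (VBool (xs = [])) (t + 1)"
| ev_head: "eval p \<rho> e (VList (b # xs)) t \<Longrightarrow> eval p \<rho> (EHead e) (VBool b) (t + 1)"
| ev_tail: "eval p \<rho> e (VList (b # xs)) t \<Longrightarrow> eval p \<rho> (ETail e) (VList xs) (t + 1)"
| ev_if_true: "eval p \<rho> e0 (VBool True) t0 \<Longrightarrow> eval p \<rho> e1 v t1 \<Longrightarrow>
      eval p \<rho> (EIf e0 e1 e2) v (t0 + t1 + 1)"
| ev_if_false: "eval p \<rho> e0 (VBool False) t0 \<Longrightarrow> eval p \<rho> e2 v t2 \<Longrightarrow>
      eval p \<rho> (EIf e0 e1 e2) v (t0 + t2 + 1)"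
| ev_call: "f < length p \<Longrightarrow> length es = fst (p ! f) \<Longrightarrow> evals p \<rho> es vs t1 \<Longrightarrow>
      eval p vs (snd (p ! f)) v t2 \<Longrightarrow> eval p \<rho> (ECall f es) v (t1 + t2 + 1)"
| evs_nil: "evals p \<rho> [] [] 0"
| evs_cons: "eval p \<rho> e v t \<Longrightarrow> evals p \<rho> es vs ts \<Longrightarrow>
      evals p \<rho> (e # es) (v # vs) (t + ts)"

text \<open>The run of p on input x: the body of the entry function evaluated with its
  single parameter bound to x; time_p(x) = t is the size of the computation tree.\<close>
definition run :: "prog \<Rightarrow> bool list \<Rightarrow> val \<Rightarrow> nat \<Rightarrow> bool" where
  "run p x v t \<longleftrightarrow> eval p [VList x] (snd (p ! 0)) v t"

datatype tf = X | T | N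

fun tf_rank :: "tf \<Rightarrow> nat" where
  "tf_rank X = 0" | "tf_rank T = 1" | "tf_rank N = 2"

definition tf_max :: "tf \<Rightarrow> tf \<Rightarrow> tf" where
  "tf_max a b = (if tf_rank a \<le> tf_rank b then b else a)"

fun alpha :: "exp \<Rightarrow> tf" where
  "alpha ETrue = X"
| "alpha EFalse = X"
| "alpha ENil = X"
| "alpha (EVar i) = X"
| "alpha (ENot e) = (if alpha e = X then X else N)"
| "alpha (ENull e) = (if alpha e = X then X else N)"
| "alpha (EHead e) = (if alpha e = X then X else N)"
| "alpha (ETail e) = (if alpha e = X then X else N)"
| "alpha (ECall f es) = (if (\<forall>e\<in>set es. alpha e = X) then T else N)"
| "alpha (EIf e0 e1 e2) = (if alpha e0 = X then tf_max (alpha e1) (alpha e2) else N)"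

definition CFTR :: "prog \<Rightarrow> bool" where
  "CFTR p \<longleftrightarrow> wf_prog p \<and> (\<forall>d\<in>set p. alpha (snd d) \<in> {X, T})"

end

theory Submission
  imports Defs "HOL-Library.Sublist"
begin

text \<open>In tail form a function body is evaluated within as many steps as it has nodes,
  except that it may end in one tail call, whose evaluation is strictly shorter. A run is
  therefore a chain of tail calls. Cons-freeness keeps every value a boolean or a suffix of
  the input x, so there are at most \<open>\<Sum>\<^sub>g (|x| + 3)^(arity g)\<close> call states; by determinism
  no state occurs twice in the chain, since the evaluation times along it strictly decrease.
  The running time is thus at most the size of the program times this polynomial.\<close>

inductive_cases eval_TrueE: "eval p r ETrue v t"
inductive_cases eval_FalseE: "eval p r EFalse v t"
inductive_cases eval_NilE: "eval p r ENil v t"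
inductive_cases eval_VarE: "eval p r (EVar i) v t"
inductive_cases eval_NotE: "eval p r (ENot e) v t"
inductive_cases eval_NullE: "eval p r (ENull e) v t"
inductive_cases eval_HeadE: "eval p r (EHead e) v t"
inductive_cases eval_TailE: "eval p r (ETail e) v t"
inductive_cases eval_IfE: "eval p r (EIf e0 e1 e2) v t"
inductive_cases eval_CallE: "eval p r (ECall f es) v t"
inductive_cases evals_NilE: "evals p r [] vs t"
inductive_cases evals_ConsE: "evals p r (e # es) vs t"

lemma eval_deterministic:
  "eval p r e v t \<Longrightarrow> eval p r e v' t' \<Longrightarrow> v' = v \<and> t' = t"
  and evals_deterministic:
  "evals p r es vs t \<Longrightarrow> evals p r es vs' t' \<Longrightarrow> vs' = vs \<and> t' = t"
proof (induction arbitrary: v' t' and vs' t' rule: eval_evals.inducts)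
  case (ev_not r e b t)
  from ev_not.prems show ?case
    by (rule eval_NotE) (use ev_not.IH in fastforce)
next
  case (ev_null r e xs t)
  from ev_null.prems show ?case
    by (rule eval_NullE) (use ev_null.IH in fastforce)
next
  case (ev_head r e b xs t)
  from ev_head.prems show ?case
    by (rule eval_HeadE) (use ev_head.IH in fastforce)
next
  case (ev_tail r e b xs t)
  from ev_tail.prems show ?case
    by (rule eval_TailE) (use ev_tail.IH in fastforce)
next
  case (ev_if_true r e0 t0 e1 v t1 e2)
  from ev_if_true.prems show ?case
  proof (rule eval_IfE)
    fix t0' t1'
    assume "t' = Suc (t0' + t1')" "eval p r e0 (VBool True) t0'" "eval p r e1 v' t1'"
    moreover from this have "t0' = t0" "v' = v \<and> t1' = t1"
      using ev_if_true.IH by blast+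
    ultimately show ?thesis
      by simp
  next
    fix t0'
    assume "eval p r e0 (VBool False) t0'"
    then show ?thesis
      using ev_if_true.IH by blast
  qed
next
  case (ev_if_false r e0 t0 e2 v t2 e1)
  from ev_if_false.prems show ?case
  proof (rule eval_IfE)
    fix t0' t2'
    assume "t' = Suc (t0' + t2')" "eval p r e0 (VBool False) t0'" "eval p r e2 v' t2'"
    moreover from this have "t0' = t0" "v' = v \<and> t2' = t2"
      using ev_if_false.IH by blast+
    ultimately show ?thesis
      by simp
  next
    fix t0'
    assume "eval p r e0 (VBool True) t0'"
    then show ?thesis
      using ev_if_false.IH by blast
  qed
next
  case (ev_call f es r vs t1 v t2)
  from ev_call.prems show ?case
    by (rule eval_CallE) (use ev_call.IH in fastforce)
next
  case (evs_cons r e v t es vs ts)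
  from evs_cons.prems show ?case
    by (rule evals_ConsE) (use evs_cons.IH in fastforce)
qed (auto elim: eval_TrueE eval_FalseE eval_NilE eval_VarE evals_NilE)

definition suffix_values :: "bool list \<Rightarrow> val set" where
  "suffix_values x = range VBool \<union> VList ` {ys. suffix ys x}"

lemma eval_suffix_values:
  "eval p r e v t \<Longrightarrow> set r \<subseteq> suffix_values x \<Longrightarrow> v \<in> suffix_values x"
  and evals_suffix_values:
  "evals p r es vs t \<Longrightarrow> set r \<subseteq> suffix_values x \<Longrightarrow> set vs \<subseteq> suffix_values x"
proof (induction rule: eval_evals.inducts)
  case (ev_var i r)
  then show ?case by (meson nth_mem subsetD)
qed (auto simp: suffix_values_def dest: suffix_ConsD)

lemma finite_suffix_values: "finite (suffix_values x)"
  by (simp add: suffix_values_def flip: set_suffixes_eq)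

lemma card_suffix_values: "card (suffix_values x) \<le> length x + 3"
proof -
  have "card (suffix_values x) \<le> card (range VBool) + card (VList ` set (suffixes x))"
    unfolding suffix_values_def set_suffixes_eq by (rule card_Un_le)
  also have "\<dots> \<le> card (UNIV :: bool set) + card (set (suffixes x))"
    by (intro add_mono card_image_le) simp_all
  finally show ?thesis by simp
qed

lemma evals_length: "evals p r es vs t \<Longrightarrow> length vs = length es"
  by (induction es arbitrary: vs t) (auto elim: evals_NilE evals_ConsE)

fun exp_nodes :: "exp \<Rightarrow> nat" where
  "exp_nodes ETrue = 1"
| "exp_nodes EFalse = 1"
| "exp_nodes ENil = 1"
| "exp_nodes (EVar i) = 1"
| "exp_nodes (ENot e) = exp_nodes e + 1"
| "exp_nodes (ENull e) = exp_nodes e + 1"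
| "exp_nodes (EHead e) = exp_nodes e + 1"
| "exp_nodes (ETail e) = exp_nodes e + 1"
| "exp_nodes (EIf e0 e1 e2) = exp_nodes e0 + exp_nodes e1 + exp_nodes e2 + 1"
| "exp_nodes (ECall f es) = sum_list (map exp_nodes es) + 1"

lemma tf_max_eq_X_iff: "tf_max a b = X \<longleftrightarrow> a = X \<and> b = X"
  by (cases a; cases b) (simp_all add: tf_max_def)

lemma tf_max_neq_N_iff: "tf_max a b \<noteq> N \<longleftrightarrow> a \<noteq> N \<and> b \<noteq> N"
  by (cases a; cases b) (simp_all add: tf_max_def)

lemma eval_time_le_exp_nodes:
  "alpha e = X \<Longrightarrow> eval p r e v t \<Longrightarrow> t \<le> exp_nodes e"
proof (induction e arbitrary: v t)
  case (EIf e0 e1 e2)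
  then have "alpha e0 = X" "alpha e1 = X" "alpha e2 = X"
    by (auto simp: tf_max_eq_X_iff split: if_splits)
  with EIf.prems(2) show ?case
    by (elim eval_IfE) (fastforce dest: EIf.IH)+
qed (auto split: if_splits elim: eval_TrueE eval_FalseE eval_NilE eval_VarE eval_NotE
       eval_NullE eval_HeadE eval_TailE)

lemma evals_time_le_exp_nodes:
  "\<forall>e\<in>set es. alpha e = X \<Longrightarrow> evals p r es vs t \<Longrightarrow> t \<le> sum_list (map exp_nodes es)"
proof (induction es arbitrary: vs t)
  case (Cons e es)
  then show ?case by (fastforce elim: evals_ConsE dest: eval_time_le_exp_nodes)
qed (auto elim: evals_NilE)

definition call_states :: "prog \<Rightarrow> bool list \<Rightarrow> (nat \<times> val list) set" where
  "call_states p x =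
     (SIGMA g:{..<length p}. {vs. set vs \<subseteq> suffix_values x \<and> length vs = fst (p ! g)})"

lemma finite_call_states: "finite (call_states p x)"
  unfolding call_states_def
  by (intro finite_SigmaI finite_lists_length_eq finite_suffix_values) simp

lemma card_call_states: "card (call_states p x) \<le> (\<Sum>g<length p. (length x + 3) ^ fst (p ! g))"
proof -
  have "card (call_states p x) = (\<Sum>g<length p. card (suffix_values x) ^ fst (p ! g))"
    unfolding call_states_def
    by (simp add: card_lists_length_eq finite_lists_length_eq finite_suffix_values)
  also have "\<dots> \<le> (\<Sum>g<length p. (length x + 3) ^ fst (p ! g))"
    by (intro sum_mono power_mono card_suffix_values) simp
  finally show ?thesis .
qed

lemma eval_tail_form:
  assumes "alpha e \<noteq> N" and "eval p r e v t" and "set r \<subseteq> suffix_values x"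
  shows "t \<le> exp_nodes e \<or>
    (\<exists>g vs t'. (g, vs) \<in> call_states p x \<and> eval p vs (snd (p ! g)) v t' \<and>
       t' < t \<and> t \<le> t' + exp_nodes e)"
  using assms
proof (induction e arbitrary: v t)
  case (EIf e0 e1 e2)
  then have "alpha e0 = X" "alpha e1 \<noteq> N" "alpha e2 \<noteq> N"
    by (auto simp: tf_max_neq_N_iff split: if_splits)
  obtain b t0 t1 where cond: "eval p r e0 (VBool b) t0"
    and branch: "eval p r (if b then e1 else e2) v t1" and t: "t = t0 + t1 + 1"
    using EIf.prems(2) by (elim eval_IfE) force+
  have "t0 \<le> exp_nodes e0"
    using eval_time_le_exp_nodes \<open>alpha e0 = X\<close> cond by blast
  moreover have "exp_nodes (if b then e1 else e2) \<le> exp_nodes e1 + exp_nodes e2"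
    by simp
  moreover have "t1 \<le> exp_nodes (if b then e1 else e2) \<or>
    (\<exists>g vs t'. (g, vs) \<in> call_states p x \<and> eval p vs (snd (p ! g)) v t' \<and>
       t' < t1 \<and> t1 \<le> t' + exp_nodes (if b then e1 else e2))"
    using EIf.IH(2,3) EIf.prems(3) \<open>alpha e1 \<noteq> N\<close> \<open>alpha e2 \<noteq> N\<close> branch
    by (cases b) simp_all
  ultimately show ?case
    unfolding t by fastforce
next
  case (ECall f es)
  then have "\<forall>e\<in>set es. alpha e = X"
    by (simp split: if_splits)
  from ECall.prems(2) show ?case
  proof (rule eval_CallE)
    fix vs t1 t2
    assume "t = Suc (t1 + t2)" "f < length p" "length es = fst (p ! f)"
      and args: "evals p r es vs t1" and body: "eval p vs (snd (p ! f)) v t2"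
    moreover have "t1 \<le> sum_list (map exp_nodes es)"
      using evals_time_le_exp_nodes \<open>\<forall>e\<in>set es. alpha e = X\<close> args by blast
    moreover have "set vs \<subseteq> suffix_values x" "length vs = length es"
      using evals_suffix_values[OF args ECall.prems(3)] evals_length[OF args] by auto
    ultimately show ?thesis
      unfolding call_states_def by (intro disjI2 exI[of _ f] exI[of _ vs] exI[of _ t2]) auto
  qed
qed (rule disjI1, erule eval_time_le_exp_nodes[rotated], simp split: if_splits)+
  \<comment> \<open>for every other constructor, \<open>alpha e \<noteq> N\<close> already forces \<open>alpha e = X\<close>\<close>

definition prog_nodes :: "prog \<Rightarrow> nat" where
  "prog_nodes p = sum_list (map (exp_nodes \<circ> snd) p)"

lemma exp_nodes_le_prog_nodes: "g < length p \<Longrightarrow> exp_nodes (snd (p ! g)) \<le> prog_nodes p"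
  unfolding prog_nodes_def using elem_le_sum_list[of g "map (exp_nodes \<circ> snd) p"] by simp

definition halting_call_states :: "prog \<Rightarrow> bool list \<Rightarrow> nat \<Rightarrow> (nat \<times> val list) set" where
  "halting_call_states p x t =
     {(g, vs) \<in> call_states p x. \<exists>v u. u \<le> t \<and> eval p vs (snd (p ! g)) v u}"

lemma finite_halting_call_states: "finite (halting_call_states p x t)"
  using finite_call_states by (rule finite_subset[rotated]) (auto simp: halting_call_states_def)

lemma halting_call_states_mono: "t' \<le> t \<Longrightarrow> halting_call_states p x t' \<subseteq> halting_call_states p x t"
  unfolding halting_call_states_def by (blast intro: le_trans)

lemma eval_body_time_le_card_halting_call_states:
  assumes "CFTR p" and "(g, vs) \<in> call_states p x" and "eval p vs (snd (p ! g)) v t"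
  shows "t \<le> prog_nodes p * card (halting_call_states p x t)"
  using assms(2,3)
proof (induction t arbitrary: g vs rule: less_induct)
  case (less t g vs)
  have "g < length p" and args: "set vs \<subseteq> suffix_values x"
    using less.prems(1) by (auto simp: call_states_def)
  then have "alpha (snd (p ! g)) \<noteq> N"
    using \<open>CFTR p\<close> nth_mem by (fastforce simp: CFTR_def)
  have body: "exp_nodes (snd (p ! g)) \<le> prog_nodes p"
    using exp_nodes_le_prog_nodes \<open>g < length p\<close> by blast
  have halting: "(g, vs) \<in> halting_call_states p x t"
    using less.prems by (auto simp: halting_call_states_def)
  from eval_tail_form[OF \<open>alpha (snd (p ! g)) \<noteq> N\<close> less.prems(2) args] show ?case
  proof (elim disjE exE conjE)
    assume "t \<le> exp_nodes (snd (p ! g))"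
    moreover have "card (halting_call_states p x t) \<ge> 1"
      using halting finite_halting_call_states by (auto simp: Suc_le_eq card_gt_0_iff)
    ultimately show ?thesis
      using body by (metis le_trans mult.right_neutral mult_le_mono2)
  next
    fix h ws t'
    assume "(h, ws) \<in> call_states p x" "eval p ws (snd (p ! h)) v t'"
      and "t' < t" and t: "t \<le> t' + exp_nodes (snd (p ! g))"
    then have IH: "t' \<le> prog_nodes p * card (halting_call_states p x t')"
      using less.IH by blast
    have "(g, vs) \<notin> halting_call_states p x t'"
    proof
      assume "(g, vs) \<in> halting_call_states p x t'"
      then obtain w u where "u \<le> t'" and "eval p vs (snd (p ! g)) w u"
        by (auto simp: halting_call_states_def)
      with eval_deterministic[OF less.prems(2)] have "u = t"
        by blast
      with \<open>u \<le> t'\<close> \<open>t' < t\<close> show False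
        by simp
    qed
    then have "halting_call_states p x t' \<subset> halting_call_states p x t"
      using halting halting_call_states_mono[of t' t p x] \<open>t' < t\<close> by auto
    then have "card (halting_call_states p x t') < card (halting_call_states p x t)"
      by (rule psubset_card_mono[OF finite_halting_call_states])
    then have "prog_nodes p + prog_nodes p * card (halting_call_states p x t')
        \<le> prog_nodes p * card (halting_call_states p x t)"
      using mult_le_mono2[of "Suc (card (halting_call_states p x t'))" _ "prog_nodes p"] by simp
    with IH t body show ?thesis by linarith
  qed
qed

lemma run_time_bound:
  assumes "CFTR p" and "run p x v t"
  shows "t \<le> prog_nodes p * (\<Sum>g<length p. (length x + 3) ^ fst (p ! g))"
proof -
  have "(0, [VList x]) \<in> call_states p x"
    using \<open>CFTR p\<close> by (auto simp: CFTR_def wf_prog_def call_states_def suffix_values_def)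
  then have "t \<le> prog_nodes p * card (halting_call_states p x t)"
    using eval_body_time_le_card_halting_call_states assms by (simp add: run_def)
  also have "card (halting_call_states p x t) \<le> card (call_states p x)"
    by (rule card_mono[OF finite_call_states]) (auto simp: halting_call_states_def)
  also note card_call_states
  finally show ?thesis by simp
qed

theorem theorem3:
  assumes "CFTR p"
  shows "\<exists>\<pi> :: real poly. \<forall>x v t. run p x v t \<longrightarrow> real t \<le> poly \<pi> (real (length x))"
proof -
  let ?\<pi> = "smult (real (prog_nodes p)) (\<Sum>g<length p. [:3, 1:] ^ fst (p ! g))"
  have "real t \<le> poly ?\<pi> (real (length x))" if "run p x v t" for x v t
  proof -
    have "real t \<le> real (prog_nodes p * (\<Sum>g<length p. (length x + 3) ^ fst (p ! g)))"
      using run_time_bound \<open>CFTR p\<close> \<open>run p x v t\<close> of_nat_le_iff by blast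
    also have "\<dots> = poly ?\<pi> (real (length x))"
      by (simp add: poly_sum algebra_simps)
    finally show ?thesis .
  qed
  then show ?thesis
    by blast
qed

end
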